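(* Let $(V,\cdot,\psi)$ be a finite-dimensional Hom-left-symmetric algebra such that $u\cdot v=\psi^2(u)\cdot v$ for all $u,v\in V$. Let $\{v_1,\dots,v_n\}$ be a basis of $V$ and $\{v^1,\dots,v^n\}$ its dual basis. Then: (a) $r_1=\sum_iv^i\wedge v_i$ and $r_2=\sum_iv^i\wedge\psi^2(v_i)$ are solutions of the classical Hom-Yang-Baxter equation in the Hom-Lie algebra $\mathfrak g(V)\ltimes_{L^\circ}V^*$. (b) If in addition the commutator Hom-Lie algebra $(\mathfrak g(V),[\cdot,\cdot]_V,\psi)$ is weakly involutive, then there are coboundary Hom-Lie bialgebra structures on $\mathfrak g(V)\ltimes_{L^\circ}V^*$ induced by $r_1$ and by $r_2$ respectively, and these two coboundary Hom-Lie bialgebra structures coincide.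
   Context: A Hom-left-symmetric algebra $(V,\cdot,\psi)$ is a vector space $V$ with a bilinear product $\cdot$ and a linear map $\psi$ with $\psi(u\cdot v)=\psi(u)\cdot\psi(v)$ and $(u\cdot v)\cdot\psi(w)-\psi(u)\cdot(v\cdot w)=(v\cdot u)\cdot\psi(w)-\psi(v)\cdot(u\cdot w)$. Its commutator Hom-Lie algebra $\mathfrak g(V)$ is $V$ with $[u,v]_V=u\cdot v-v\cdot u$ and twisting map $\psi$; $L_uv=u\cdot v$. Define $L^\circ:V\to\mathfrak{gl}(V^* )$ by $\langle L^\circ_u\xi,v\rangle=-\langle\xi,\psi(u)\cdot v\rangle$. $\mathfrak g(V)\ltimes_{L^\circ}V^*$ is $V\oplus V^*$ with bracket $[(u,\xi),(v,\eta)]=([u,v]_V,L^\circ_u\eta-L^\circ_v\xi)$ and twisting map $\psi\oplus\psi^*$. $a\wedge b=a\otimes b-b\otimes a$. A Hom-Lie algebra $(\mathfrak h,[\cdot,\cdot],\phi)$: skew-symmetric bracket, $\phi[x,y]=[\phi x,\phi y]$, $[\phi(x),[y,z]]+[\phi(y),[z,x]]+[\phi(z),[x,y]]=0$; weakly involutive if $[\phi^2(x),y]=[x,y]$. For $r=\sum_ix_i\otimes y_i$, $[r,r]=\sum_{i,j}([x_i,x_j]\otimes\phi(y_i)\otimes\phi(y_j)+\phi(x_i)\otimes[y_i,x_j]\otimes\phi(y_j)+\phi(x_i)\otimes\phi(x_j)\otimes[y_i,y_j])$; the classical Hom-Yang-Baxter equation is $[r,r]=0$. For $z\in\mathfrak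 h$, $t\in\mathfrak h\otimes\mathfrak h$: $\mathrm{ad}_zt=(\mathrm{ad}_z\otimes\phi+\phi\otimes\mathrm{ad}_z)t$. A Hom-Lie bialgebra $(\mathfrak h,\Delta)$: $\mathfrak h$ weakly involutive, $\Delta:\mathfrak h\to\mathfrak h\otimes\mathfrak h$ such that $\mathfrak h^*$ with $\langle[a,b],x\rangle=\langle\Delta(x),a\otimes b\rangle$ and $\phi^*$ is a weakly involutive Hom-Lie algebra and $\Delta[x,y]=\mathrm{ad}_{\phi(x)}\Delta(y)-\mathrm{ad}_{\phi(y)}\Delta(x)$. The coboundary structure induced by $r$ (with $(\phi\otimes\mathrm{Id})r=(\mathrm{Id}\otimes\phi)r$) is $\Delta(x)=\mathrm{ad}_xr$. *)

theory Defs
  imports Main "HOL-Library.Function_Algebras"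
begin

text \<open>Finite-dimensional vector spaces over a field 'k are modelled in coordinates as
  functions 'i \<Rightarrow> 'k with 'i a finite index type (pointwise addition from
  Function_Algebras). Tensor powers are functions on pairs / triples of indices.\<close>

definition vsc :: "'k::times \<Rightarrow> ('i \<Rightarrow> 'k) \<Rightarrow> ('i \<Rightarrow> 'k)" where
  "vsc c u = (\<lambda>i. c * u i)"

definition lin :: "(('i \<Rightarrow> 'k::field) \<Rightarrow> ('j \<Rightarrow> 'k)) \<Rightarrow> bool" where
  "lin f \<longleftrightarrow> (\<forall>u v. f (u + v) = f u + f v) \<and> (\<forall>c u. f (vsc c u) = vsc c (f u))"

definition bilin :: "(('i \<Rightarrow> 'k::field) \<Rightarrow> ('j \<Rightarrow> 'k) \<Rightarrow> ('l \<Rightarrow> 'k)) \<Rightarrow> bool" where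
  "bilin m \<longleftrightarrow> (\<forall>u. lin (m u)) \<and> (\<forall>v. lin (\<lambda>u. m u v))"

definition ev :: "'i \<Rightarrow> 'i \<Rightarrow> 'k::field" where
  "ev a = (\<lambda>b. if b = a then 1 else 0)"

text \<open>natural pairing of a dual vector (in dual coordinates) with a vector\<close>
definition dpair :: "('i::finite \<Rightarrow> 'k::field) \<Rightarrow> ('i \<Rightarrow> 'k) \<Rightarrow> 'k" where
  "dpair \<xi> v = (\<Sum>i\<in>UNIV. \<xi> i * v i)"

definition is_basis :: "('n::finite \<Rightarrow> 'n \<Rightarrow> 'k::field) \<Rightarrow> bool" where
  "is_basis b \<longleftrightarrow> (\<forall>v. \<exists>!c. v = (\<Sum>i\<in>UNIV. vsc (c i) (b i)))"

definition tensor2 :: "('i \<Rightarrow> 'k::field) \<Rightarrow> ('i \<Rightarrow> 'k) \<Rightarrow> ('i \<times> 'i \<Rightarrow> 'k)" where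
  "tensor2 x y = (\<lambda>(a, b). x a * y b)"

definition tensor3 :: "('i \<Rightarrow> 'k::field) \<Rightarrow> ('i \<Rightarrow> 'k) \<Rightarrow> ('i \<Rightarrow> 'k) \<Rightarrow> ('i \<times> 'i \<times> 'i \<Rightarrow> 'k)" where
  "tensor3 x y z = (\<lambda>(a, b, c). x a * y b * z c)"

text \<open>(A \<otimes> B) t for a 2-tensor t\<close>
definition tmap2 :: "(('i::finite \<Rightarrow> 'k::field) \<Rightarrow> ('i \<Rightarrow> 'k)) \<Rightarrow> (('i \<Rightarrow> 'k) \<Rightarrow> ('i \<Rightarrow> 'k))
    \<Rightarrow> ('i \<times> 'i \<Rightarrow> 'k) \<Rightarrow> ('i \<times> 'i \<Rightarrow> 'k)" where
  "tmap2 A B t = (\<Sum>p\<in>UNIV. vsc (t p) (tensor2 (A (ev (fst p))) (B (ev (snd p)))))"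

definition tensor_of :: "'j set \<Rightarrow> ('j \<Rightarrow> 'i \<Rightarrow> 'k::field) \<Rightarrow> ('j \<Rightarrow> 'i \<Rightarrow> 'k) \<Rightarrow> ('i \<times> 'i \<Rightarrow> 'k)" where
  "tensor_of I x y = (\<Sum>j\<in>I. tensor2 (x j) (y j))"

text \<open>[r,r] for r = \<Sum>_{i\<in>I} x_i \<otimes> y_i\<close>
definition CYB :: "(('i \<Rightarrow> 'k::field) \<Rightarrow> ('i \<Rightarrow> 'k) \<Rightarrow> ('i \<Rightarrow> 'k)) \<Rightarrow> (('i \<Rightarrow> 'k) \<Rightarrow> ('i \<Rightarrow> 'k))
    \<Rightarrow> 'j set \<Rightarrow> ('j \<Rightarrow> 'i \<Rightarrow> 'k) \<Rightarrow> ('j \<Rightarrow> 'i \<Rightarrow> 'k) \<Rightarrow> ('i \<times> 'i \<times> 'i \<Rightarrow> 'k)" where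
  "CYB br phi I x y = (\<Sum>i\<in>I. \<Sum>j\<in>I.
      tensor3 (br (x i) (x j)) (phi (y i)) (phi (y j))
    + tensor3 (phi (x i)) (br (y i) (x j)) (phi (y j))
    + tensor3 (phi (x i)) (phi (x j)) (br (y i) (y j)))"

text \<open>a \<wedge> b families: \<Sum>_i a_i \<wedge> b_i = \<Sum>_i (a_i \<otimes> b_i - b_i \<otimes> a_i), written as \<Sum>_{p} x_p \<otimes> y_p
  with p ranging over 'n \<times> bool\<close>
definition wedge_x :: "('n \<Rightarrow> 'i \<Rightarrow> 'k::field) \<Rightarrow> ('n \<Rightarrow> 'i \<Rightarrow> 'k) \<Rightarrow> ('n \<times> bool \<Rightarrow> 'i \<Rightarrow> 'k)" where
  "wedge_x a b p = (if snd p then a (fst p) else - b (fst p))"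

definition wedge_y :: "('n \<Rightarrow> 'i \<Rightarrow> 'k::field) \<Rightarrow> ('n \<Rightarrow> 'i \<Rightarrow> 'k) \<Rightarrow> ('n \<times> bool \<Rightarrow> 'i \<Rightarrow> 'k)" where
  "wedge_y a b p = (if snd p then b (fst p) else a (fst p))"

definition hom_lie :: "(('i::finite \<Rightarrow> 'k::field) \<Rightarrow> ('i \<Rightarrow> 'k) \<Rightarrow> ('i \<Rightarrow> 'k)) \<Rightarrow> (('i \<Rightarrow> 'k) \<Rightarrow> ('i \<Rightarrow> 'k)) \<Rightarrow> bool" where
  "hom_lie br phi \<longleftrightarrow> bilin br \<and> lin phi
     \<and> (\<forall>x y. br x y = - br y x)
     \<and> (\<forall>x y. phi (br x y) = br (phi x) (phi y))
     \<and> (\<forall>x y z. br (phi x) (br y z) + br (phi y) (br z x) + br (phi z) (br x y) = 0)"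

definition weakly_inv :: "(('i \<Rightarrow> 'k) \<Rightarrow> ('i \<Rightarrow> 'k) \<Rightarrow> ('i \<Rightarrow> 'k)) \<Rightarrow> (('i \<Rightarrow> 'k) \<Rightarrow> ('i \<Rightarrow> 'k)) \<Rightarrow> bool" where
  "weakly_inv br phi \<longleftrightarrow> (\<forall>x y. br (phi (phi x)) y = br x y)"

definition ad_t :: "(('i::finite \<Rightarrow> 'k::field) \<Rightarrow> ('i \<Rightarrow> 'k) \<Rightarrow> ('i \<Rightarrow> 'k)) \<Rightarrow> (('i \<Rightarrow> 'k) \<Rightarrow> ('i \<Rightarrow> 'k))
    \<Rightarrow> ('i \<Rightarrow> 'k) \<Rightarrow> ('i \<times> 'i \<Rightarrow> 'k) \<Rightarrow> ('i \<times> 'i \<Rightarrow> 'k)" where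
  "ad_t br phi z t = tmap2 (br z) phi t + tmap2 phi (br z) t"

text \<open>bracket on the dual: <[a,b],x> = <\<Delta>(x), a \<otimes> b>; dual elements in dual coordinates\<close>
definition dual_br :: "(('i::finite \<Rightarrow> 'k::field) \<Rightarrow> ('i \<times> 'i \<Rightarrow> 'k)) \<Rightarrow> ('i \<Rightarrow> 'k) \<Rightarrow> ('i \<Rightarrow> 'k) \<Rightarrow> ('i \<Rightarrow> 'k)" where
  "dual_br Delta a b = (\<lambda>p. \<Sum>q\<in>UNIV. Delta (ev p) q * (a (fst q) * b (snd q)))"

text \<open>transpose map: <\<phi>* \<alpha>, x> = <\<alpha>, \<phi> x>\<close>
definition dual_map :: "(('i::finite \<Rightarrow> 'k::field) \<Rightarrow> ('i \<Rightarrow> 'k)) \<Rightarrow> ('i \<Rightarrow> 'k) \<Rightarrow> ('i \<Rightarrow> 'k)" where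
  "dual_map phi \<alpha> = (\<lambda>p. dpair \<alpha> (phi (ev p)))"

definition hom_lie_bialg :: "(('i::finite \<Rightarrow> 'k::field) \<Rightarrow> ('i \<Rightarrow> 'k) \<Rightarrow> ('i \<Rightarrow> 'k)) \<Rightarrow> (('i \<Rightarrow> 'k) \<Rightarrow> ('i \<Rightarrow> 'k))
    \<Rightarrow> (('i \<Rightarrow> 'k) \<Rightarrow> ('i \<times> 'i \<Rightarrow> 'k)) \<Rightarrow> bool" where
  "hom_lie_bialg br phi Delta \<longleftrightarrow>
     hom_lie br phi \<and> weakly_inv br phi \<and> lin Delta
     \<and> hom_lie (dual_br Delta) (dual_map phi) \<and> weakly_inv (dual_br Delta) (dual_map phi)
     \<and> (\<forall>x y. Delta (br x y) = ad_t br phi (phi x) (Delta y) - ad_t br phi (phi y) (Delta x))"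

definition cobound :: "(('i::finite \<Rightarrow> 'k::field) \<Rightarrow> ('i \<Rightarrow> 'k) \<Rightarrow> ('i \<Rightarrow> 'k)) \<Rightarrow> (('i \<Rightarrow> 'k) \<Rightarrow> ('i \<Rightarrow> 'k))
    \<Rightarrow> ('i \<times> 'i \<Rightarrow> 'k) \<Rightarrow> ('i \<Rightarrow> 'k) \<Rightarrow> ('i \<times> 'i \<Rightarrow> 'k)" where
  "cobound br phi r = (\<lambda>x. ad_t br phi x r)"

definition hom_lsa :: "(('n::finite \<Rightarrow> 'k::field) \<Rightarrow> ('n \<Rightarrow> 'k) \<Rightarrow> ('n \<Rightarrow> 'k)) \<Rightarrow> (('n \<Rightarrow> 'k) \<Rightarrow> ('n \<Rightarrow> 'k)) \<Rightarrow> bool" where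
  "hom_lsa m psi \<longleftrightarrow> bilin m \<and> lin psi
     \<and> (\<forall>u v. psi (m u v) = m (psi u) (psi v))
     \<and> (\<forall>u v w. m (m u v) (psi w) - m (psi u) (m v w) = m (m v u) (psi w) - m (psi v) (m u w))"

definition comm :: "(('n \<Rightarrow> 'k::field) \<Rightarrow> ('n \<Rightarrow> 'k) \<Rightarrow> ('n \<Rightarrow> 'k)) \<Rightarrow> ('n \<Rightarrow> 'k) \<Rightarrow> ('n \<Rightarrow> 'k) \<Rightarrow> ('n \<Rightarrow> 'k)" where
  "comm m u v = m u v - m v u"

text \<open><L\<degree>_u \<xi>, v> = - <\<xi>, \<psi>(u) \<cdot> v>, in dual coordinates\<close>
definition Lcirc :: "(('n::finite \<Rightarrow> 'k::field) \<Rightarrow> ('n \<Rightarrow> 'k) \<Rightarrow> ('n \<Rightarrow> 'k)) \<Rightarrow> (('n \<Rightarrow> 'k) \<Rightarrow> ('n \<Rightarrow> 'k))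
    \<Rightarrow> ('n \<Rightarrow> 'k) \<Rightarrow> ('n \<Rightarrow> 'k) \<Rightarrow> ('n \<Rightarrow> 'k)" where
  "Lcirc m psi u \<xi> = (\<lambda>j. - dpair \<xi> (m (psi u) (ev j)))"

text \<open>V \<oplus> V* as coordinates on 'n + 'n (Inl: V part, Inr: V* part)\<close>
definition mkp :: "('n \<Rightarrow> 'k) \<Rightarrow> ('n \<Rightarrow> 'k) \<Rightarrow> ('n + 'n \<Rightarrow> 'k)" where
  "mkp u \<xi> = (\<lambda>a. case a of Inl i \<Rightarrow> u i | Inr i \<Rightarrow> \<xi> i)"

definition vpart :: "('n + 'n \<Rightarrow> 'k) \<Rightarrow> ('n \<Rightarrow> 'k)" where
  "vpart x = (\<lambda>i. x (Inl i))"

definition dpart :: "('n + 'n \<Rightarrow> 'k) \<Rightarrow> ('n \<Rightarrow> 'k)" where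
  "dpart x = (\<lambda>i. x (Inr i))"

definition sd_br :: "(('n::finite \<Rightarrow> 'k::field) \<Rightarrow> ('n \<Rightarrow> 'k) \<Rightarrow> ('n \<Rightarrow> 'k)) \<Rightarrow> (('n \<Rightarrow> 'k) \<Rightarrow> ('n \<Rightarrow> 'k))
    \<Rightarrow> ('n + 'n \<Rightarrow> 'k) \<Rightarrow> ('n + 'n \<Rightarrow> 'k) \<Rightarrow> ('n + 'n \<Rightarrow> 'k)" where
  "sd_br m psi x y = mkp (comm m (vpart x) (vpart y))
      (Lcirc m psi (vpart x) (dpart y) - Lcirc m psi (vpart y) (dpart x))"

definition sd_tw :: "(('n::finite \<Rightarrow> 'k::field) \<Rightarrow> ('n \<Rightarrow> 'k)) \<Rightarrow> ('n + 'n \<Rightarrow> 'k) \<Rightarrow> ('n + 'n \<Rightarrow> 'k)" where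
  "sd_tw psi x = mkp (psi (vpart x)) (dual_map psi (dpart x))"

end

(* In the coordinates of V \<oplus> V*, the tensor r_f = \<Sum>_i v^i \<wedge> f(v_i) is the matrix of f placed off the
   diagonal, so it does not depend on the basis.
   (a) Summing over the dual bases, each component of [r_f, r_f] collapses by linearity to terms
   \<psi> f(u \<cdot> v) and [f \<psi> u, f \<psi> v]; for f = id and f = \<psi>\<^sup>2 they cancel, because \<psi> and f are
   multiplicative and u \<cdot> v = \<psi>\<^sup>2(u) \<cdot> v.
   (b) Write \<phi> = \<psi> \<oplus> \<psi>*. The bracket induced on the dual by \<Delta> = ad r_1 is the semidirect bracket
   itself, transported along the swap V \<oplus> V* = V* \<oplus> V, so the dual is again a weakly involutive
   Hom-Lie algebra. The cocycle identity follows from the Hom-Jacobi identity, since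
   ad_z ((\<phi> \<otimes> \<phi>) r_1) = ad_z r_1 when the algebra is weakly involutive and (\<phi> \<otimes> id) r_1 = (id \<otimes> \<phi>) r_1.
   Finally r_2 = (\<phi> \<otimes> \<phi>) r_1, hence r_2 induces the same coboundary. *)

theory Submission
  imports Defs
begin

lemma mult_if_zero [simp]:
  "(a :: 'a::mult_zero) * (if P then b else 0) = (if P then a * b else 0)"
  "(if P then b else 0) * a = (if P then b * a else 0)"
  by simp_all

lemma vsc_apply [simp]: "vsc c u i = c * u i"
  by (simp add: vsc_def)

lemma ev_apply: "ev a b = (if b = a then 1 else 0)"
  by (simp add: ev_def)

lemma sum_apply: "(\<Sum>i\<in>A. f i) x = (\<Sum>i\<in>A. f i x)"
proof (cases "finite A")
  case True
  then show ?thesis by (induction A rule: finite_induct) auto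
qed simp

lemma sum_UNIV_Plus:
  "(\<Sum>x\<in>(UNIV :: ('a::finite + 'b::finite) set). g x) = (\<Sum>a\<in>UNIV. g (Inl a)) + (\<Sum>b\<in>UNIV. g (Inr b))"
  using sum.Plus[of "UNIV :: 'a set" "UNIV :: 'b set" g] by (simp add: comp_def)

lemma sum_UNIV_prod:
  "(\<Sum>x\<in>(UNIV :: ('a::finite \<times> 'b::finite) set). g x) = (\<Sum>a\<in>UNIV. \<Sum>b\<in>UNIV. g (a, b))"
  using sum.cartesian_product[of "\<lambda>a b. g (a, b)" "UNIV :: 'b set" "UNIV :: 'a set"] by simp

lemma sum_UNIV_prod_bool:
  "(\<Sum>x\<in>(UNIV :: ('a::finite \<times> bool) set). g x) = (\<Sum>a\<in>UNIV. g (a, True) + g (a, False))"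
  by (simp add: sum_UNIV_prod UNIV_bool add.commute)

lemma fun_eq_sum_ev: "(u :: 'i::finite \<Rightarrow> 'k::field) = (\<Sum>i\<in>UNIV. vsc (u i) (ev i))"
  by (rule ext) (simp add: sum_apply ev_def)

lemma fun_Plus_eqI: "(\<And>k. f (Inl k) = g (Inl k)) \<Longrightarrow> (\<And>k. f (Inr k) = g (Inr k)) \<Longrightarrow> f = g"
  by (rule ext) (metis sum.exhaust)

lemma linI: "(\<And>u v j. F (u + v) j = F u j + F v j) \<Longrightarrow> (\<And>c u j. F (vsc c u) j = c * F u j) \<Longrightarrow> lin F"
  by (auto simp: lin_def fun_eq_iff)

lemma lin_add: "lin f \<Longrightarrow> f (u + v) = f u + f v"
  by (simp add: lin_def)

lemma lin_vsc: "lin f \<Longrightarrow> f (vsc c u) = vsc c (f u)"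
  by (simp add: lin_def)

lemma lin_zero: "lin f \<Longrightarrow> f 0 = 0"
  using lin_vsc[of f 0 0] by (simp add: vsc_def zero_fun_def)

lemma lin_uminus: "lin f \<Longrightarrow> f (- u) = - f u"
proof -
  have "- v = vsc (-1) v" for v :: "'i \<Rightarrow> 'k::field"
    by (simp add: fun_eq_iff)
  then show "lin f \<Longrightarrow> f (- u) = - f u"
    by (metis lin_vsc)
qed

lemma lin_diff: "lin f \<Longrightarrow> f (u - v) = f u - f v"
  using lin_add[of f u "- v"] lin_uminus[of f v] by simp

lemma lin_sum: "lin f \<Longrightarrow> f (\<Sum>i\<in>A. g i) = (\<Sum>i\<in>A. f (g i))"
  by (induction A rule: infinite_finite_induct) (simp_all add: lin_zero lin_add fun_eq_iff)

lemma lin_apply_eq_sum: "lin f \<Longrightarrow> f (u :: 'i::finite \<Rightarrow> 'k::field) x = (\<Sum>i\<in>UNIV. u i * f (ev i) x)"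
  by (subst fun_eq_sum_ev) (simp add: lin_sum lin_vsc sum_apply)

lemma lin_ident [simp]: "lin (\<lambda>x. x)"
  by (simp add: lin_def)

lemma lin_compose: "lin f \<Longrightarrow> lin g \<Longrightarrow> lin (\<lambda>x. f (g x))"
  by (simp add: lin_def)

lemma bilin_lin_right: "bilin m \<Longrightarrow> lin (m u)"
  and bilin_lin_left: "bilin m \<Longrightarrow> lin (\<lambda>u. m u v)"
  by (simp_all add: bilin_def)

definition lin_functional :: "(('i \<Rightarrow> 'k::field) \<Rightarrow> 'k) \<Rightarrow> bool" where
  "lin_functional h \<longleftrightarrow> (\<forall>u v. h (u + v) = h u + h v) \<and> (\<forall>c u. h (vsc c u) = c * h u)"

lemma lin_functional_coord: "lin f \<Longrightarrow> lin_functional (\<lambda>u. f u x)"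
  by (simp add: lin_def lin_functional_def)

lemma lin_functional_scale: "lin_functional h \<Longrightarrow> lin_functional (\<lambda>u. c * h u)"
  and lin_functional_uminus: "lin_functional h \<Longrightarrow> lin_functional (\<lambda>u. - h u)"
  by (simp_all add: lin_functional_def algebra_simps)

lemma lin_functional_sum:
  assumes "lin_functional h"
  shows "h (\<Sum>i\<in>A. g i) = (\<Sum>i\<in>A. h (g i))"
proof -
  have "h 0 = 0"
    using assms[unfolded lin_functional_def] by (metis add_cancel_left_right add_0)
  with assms show ?thesis
    by (induction A rule: infinite_finite_induct) (simp_all add: lin_functional_def)
qed

lemma lin_functional_eq_sum:
  "lin_functional h \<Longrightarrow> h (u :: 'i::finite \<Rightarrow> 'k::field) = (\<Sum>i\<in>UNIV. u i * h (ev i))"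
  by (subst fun_eq_sum_ev) (simp add: lin_functional_sum lin_functional_def)

lemma dpair_commute: "dpair u v = dpair v u"
  by (simp add: dpair_def mult.commute)

lemma dpair_add: "dpair \<xi> (u + v) = dpair \<xi> u + dpair \<xi> v"
  and dpair_vsc: "dpair \<xi> (vsc c u) = c * dpair \<xi> u"
  and dpair_diff: "dpair \<xi> (u - v) = dpair \<xi> u - dpair \<xi> v"
  and dpair_uminus [simp]: "dpair \<xi> (- u) = - dpair \<xi> u"
  and dpair_zero [simp]: "dpair \<xi> 0 = 0" "dpair 0 \<xi> = 0"
  by (simp_all add: dpair_def sum.distrib sum_distrib_left sum_subtractf sum_negf algebra_simps)

lemma dpair_ev [simp]: "dpair \<xi> (ev c) = \<xi> c" "dpair (ev c) \<xi> = \<xi> c"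
  by (simp_all add: dpair_def ev_def)

lemma lin_functional_dpair: "lin f \<Longrightarrow> lin_functional (\<lambda>u. dpair \<xi> (f u))"
  by (simp add: lin_def lin_functional_def dpair_add dpair_vsc)

lemma dpair_eq_sum:
  fixes u :: "'i::finite \<Rightarrow> 'k::field"
  assumes "lin f"
  shows "dpair \<xi> (f u) = (\<Sum>i\<in>UNIV. u i * dpair \<xi> (f (ev i)))"
  using lin_functional_eq_sum[OF lin_functional_dpair[OF assms]] .

lemma dpair_Plus: "dpair (x :: ('n::finite + 'n) \<Rightarrow> 'k::field) y = dpair (vpart x) (vpart y) + dpair (dpart x) (dpart y)"
  by (simp add: dpair_def sum_UNIV_Plus vpart_def dpart_def)

lemma dual_map_apply: "dual_map psi \<xi> k = dpair \<xi> (psi (ev k))"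
  by (simp add: dual_map_def)

lemma dual_map_zero [simp]: "dual_map psi 0 = 0"
  by (simp add: dual_map_def fun_eq_iff)

lemma dpair_dual_map:
  assumes "lin psi"
  shows "dpair (dual_map psi \<xi>) y = dpair \<xi> (psi y)"
  by (subst dpair_eq_sum[OF assms]) (simp add: dpair_def dual_map_apply mult.commute)

lemma dpair_dual_map_ev: "lin psi \<Longrightarrow> dpair v (dual_map psi (ev c)) = psi v c"
  by (simp add: dpair_commute[of v] dpair_dual_map)

lemma tmap2_apply': "tmap2 A B t q = (\<Sum>p\<in>UNIV. t p * (A (ev (fst p)) (fst q) * B (ev (snd p)) (snd q)))"
  by (cases q) (simp add: tmap2_def sum_apply tensor2_def)

lemma tmap2_apply: "tmap2 A B t (x, y) = (\<Sum>p\<in>UNIV. t p * (A (ev (fst p)) x * B (ev (snd p)) y))"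
  by (simp add: tmap2_apply')

lemma tmap2_add: "tmap2 A B (t1 + t2) = tmap2 A B t1 + tmap2 A B t2"
  by (rule ext, clarify) (simp add: tmap2_apply sum.distrib algebra_simps)

lemma tmap2_add_left: "tmap2 (\<lambda>u. A u + A' u) B t = tmap2 A B t + tmap2 A' B t"
  and tmap2_add_right: "tmap2 A (\<lambda>u. B u + B' u) t = tmap2 A B t + tmap2 A B' t"
  and tmap2_vsc_left: "tmap2 (\<lambda>u. vsc c (A u)) B t = vsc c (tmap2 A B t)"
  and tmap2_vsc_right: "tmap2 A (\<lambda>u. vsc c (B u)) t = vsc c (tmap2 A B t)"
  by (rule ext, clarify, simp add: tmap2_apply sum.distrib sum_distrib_left algebra_simps)+

lemma tmap2_id_left: "tmap2 id B t (x, y) = (\<Sum>q\<in>UNIV. t (x, q) * B (ev q) y)"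
proof -
  have "(\<Sum>b\<in>UNIV. t (a, b) * (ev a x * B (ev b) y)) = (if a = x then (\<Sum>q\<in>UNIV. t (x, q) * B (ev q) y) else 0)" for a
    by (cases "a = x") (simp_all add: ev_apply)
  then show ?thesis
    by (simp add: tmap2_apply sum_UNIV_prod sum.delta')
qed

lemma tmap2_id_right: "tmap2 A id t (x, y) = (\<Sum>q\<in>UNIV. t (q, y) * A (ev q) x)"
  by (simp add: tmap2_apply sum_UNIV_prod ev_apply mult.commute)

lemma tmap2_compose:
  fixes A B C D :: "('i::finite \<Rightarrow> 'k::field) \<Rightarrow> ('i \<Rightarrow> 'k)"
  assumes A: "lin A" and B: "lin B"
  shows "tmap2 A B (tmap2 C D t) = tmap2 (\<lambda>u. A (C u)) (\<lambda>u. B (D u)) t"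
proof (rule ext, clarify)
  fix x y
  have "tmap2 A B (tmap2 C D t) (x, y)
      = (\<Sum>q\<in>UNIV. \<Sum>p\<in>UNIV. t p * ((C (ev (fst p)) (fst q) * A (ev (fst q)) x) * (D (ev (snd p)) (snd q) * B (ev (snd q)) y)))"
    by (simp only: tmap2_apply tmap2_apply'[of C D t] sum_distrib_right) (simp add: algebra_simps)
  also have "\<dots> = (\<Sum>p\<in>UNIV. t p * (\<Sum>q\<in>UNIV. (C (ev (fst p)) (fst q) * A (ev (fst q)) x) * (D (ev (snd p)) (snd q) * B (ev (snd q)) y)))"
    by (subst sum.swap) (simp add: sum_distrib_left)
  also have "\<dots> = (\<Sum>p\<in>UNIV. t p * ((\<Sum>q1\<in>UNIV. C (ev (fst p)) q1 * A (ev q1) x) * (\<Sum>q2\<in>UNIV. D (ev (snd p)) q2 * B (ev q2) y)))"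
    by (simp add: sum_product sum_UNIV_prod)
  also have "\<dots> = tmap2 (\<lambda>u. A (C u)) (\<lambda>u. B (D u)) t (x, y)"
    by (simp only: tmap2_apply lin_apply_eq_sum[OF A, of "C _"] lin_apply_eq_sum[OF B, of "D _"])
  finally show "tmap2 A B (tmap2 C D t) (x, y) = tmap2 (\<lambda>u. A (C u)) (\<lambda>u. B (D u)) t (x, y)" .
qed

lemma tmap2_pairing:
  "(\<Sum>q\<in>UNIV. tmap2 A B t q * (a (fst q) * b (snd q)))
     = (\<Sum>s\<in>UNIV. t s * (dpair a (A (ev (fst s))) * dpair b (B (ev (snd s)))))"
proof -
  have "(\<Sum>q\<in>UNIV. tmap2 A B t q * (a (fst q) * b (snd q)))
      = (\<Sum>q\<in>UNIV. \<Sum>s\<in>UNIV. t s * ((A (ev (fst s)) (fst q) * a (fst q)) * (B (ev (snd s)) (snd q) * b (snd q))))"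
    by (simp only: tmap2_apply' sum_distrib_right) (simp add: algebra_simps)
  also have "\<dots> = (\<Sum>s\<in>UNIV. t s * (\<Sum>q1\<in>UNIV. \<Sum>q2\<in>UNIV. (A (ev (fst s)) q1 * a q1) * (B (ev (snd s)) q2 * b q2)))"
    by (subst sum.swap) (simp add: sum_distrib_left sum_UNIV_prod)
  finally show ?thesis
    by (simp add: dpair_def sum_product mult.commute)
qed

lemma tmap2_square_left:
  assumes lp: "lin phi" and R: "tmap2 phi id R = tmap2 id phi R"
  shows "tmap2 (\<lambda>u. phi (phi u)) id R = tmap2 phi phi R"
proof -
  have "tmap2 (\<lambda>u. phi (phi u)) id R = tmap2 phi id (tmap2 phi id R)"
    unfolding id_def by (simp add: tmap2_compose[OF lp lin_ident])
  also have "\<dots> = tmap2 phi id (tmap2 id phi R)"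
    by (simp only: R)
  also have "\<dots> = tmap2 phi phi R"
    unfolding id_def by (simp add: tmap2_compose[OF lp lin_ident])
  finally show ?thesis .
qed

lemma tmap2_square_right:
  assumes lp: "lin phi" and R: "tmap2 phi id R = tmap2 id phi R"
  shows "tmap2 id (\<lambda>u. phi (phi u)) R = tmap2 phi phi R"
proof -
  have "tmap2 id (\<lambda>u. phi (phi u)) R = tmap2 id phi (tmap2 id phi R)"
    unfolding id_def by (simp add: tmap2_compose[OF lin_ident lp])
  also have "\<dots> = tmap2 id phi (tmap2 phi id R)"
    by (simp only: R)
  also have "\<dots> = tmap2 phi phi R"
    unfolding id_def by (simp add: tmap2_compose[OF lin_ident lp])
  finally show ?thesis .
qed

lemma tmap2_twist_sym_tmap2:
  assumes lp: "lin phi" and R: "tmap2 phi id R = tmap2 id phi R"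
  shows "tmap2 phi id (tmap2 phi phi R) = tmap2 id phi (tmap2 phi phi R)"
proof -
  have "tmap2 phi id (tmap2 phi phi R) = tmap2 id phi (tmap2 (\<lambda>u. phi (phi u)) id R)"
    unfolding id_def by (simp add: tmap2_compose[OF lp lin_ident] tmap2_compose[OF lin_ident lp])
  then show ?thesis
    by (simp only: tmap2_square_left[OF lp R])
qed

subsection \<open>Hom-Lie algebras\<close>

lemma hom_lie_bilin: "hom_lie br phi \<Longrightarrow> bilin br"
  and hom_lie_lin: "hom_lie br phi \<Longrightarrow> lin phi"
  and hom_lie_skew: "hom_lie br phi \<Longrightarrow> br x y = - br y x"
  and hom_lie_mult: "hom_lie br phi \<Longrightarrow> phi (br x y) = br (phi x) (phi y)"
  and hom_lie_jacobi: "hom_lie br phi \<Longrightarrow> br (phi x) (br y z) + br (phi y) (br z x) + br (phi z) (br x y) = 0"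
  unfolding hom_lie_def by blast+

lemma hom_lie_leibniz:
  assumes H: "hom_lie br phi"
  shows "br (phi x) (br y u) = br (phi y) (br x u) + br (br x y) (phi u)"
proof -
  have "br (phi y) (br u x) = - br (phi y) (br x u)"
    by (subst hom_lie_skew[OF H, of u x]) (rule lin_uminus[OF bilin_lin_right[OF hom_lie_bilin[OF H]]])
  moreover have "br (phi u) (br x y) = - br (br x y) (phi u)"
    by (rule hom_lie_skew[OF H])
  ultimately have "br (phi x) (br y u) - br (phi y) (br x u) - br (br x y) (phi u) = 0"
    using hom_lie_jacobi[OF H, of x y u] by (simp only: diff_conv_add_uminus)
  then show ?thesis
    by (simp only: diff_diff_eq eq_iff_diff_eq_0[symmetric])
qed

lemma ad_t_bracket:
  assumes H: "hom_lie br phi"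
  shows "ad_t br phi (phi x) (ad_t br phi y t) - ad_t br phi (phi y) (ad_t br phi x t)
    = ad_t br phi (br x y) (tmap2 phi phi t)"
proof -
  have lb: "lin (br z)" for z
    by (rule bilin_lin_right[OF hom_lie_bilin[OF H]])
  note lp = hom_lie_lin[OF H]
  show ?thesis
    by (rule ext, clarify)
      (simp add: ad_t_def tmap2_add tmap2_compose[OF lb lp] tmap2_compose[OF lp lb]
        tmap2_compose[OF lb lb] tmap2_compose[OF lp lp] tmap2_apply hom_lie_leibniz[OF H, of x y]
        hom_lie_mult[OF H, symmetric] sum_subtractf[symmetric] sum.distrib[symmetric] algebra_simps)
qed

lemma ad_t_tmap2_twist:
  assumes H: "hom_lie br phi" and W: "weakly_inv br phi"
    and R: "tmap2 phi id R = tmap2 id phi R"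
  shows "ad_t br phi z (tmap2 phi phi R) = ad_t br phi z R"
proof -
  note lp = hom_lie_lin[OF H]
  have lb: "lin (br z)"
    by (rule bilin_lin_right[OF hom_lie_bilin[OF H]])
  have br_square: "br z (phi (phi u)) = br z u" for u
  proof -
    have "br z (phi (phi u)) = - br (phi (phi u)) z"
      by (rule hom_lie_skew[OF H])
    also have "\<dots> = - br u z"
      using W by (simp add: weakly_inv_def)
    also have "\<dots> = br z u"
      by (simp add: hom_lie_skew[OF H, of z u])
    finally show ?thesis .
  qed
  have "ad_t br phi z (tmap2 phi phi R)
      = tmap2 (br z) phi (tmap2 (\<lambda>u. phi (phi u)) id R) + tmap2 phi (br z) (tmap2 id (\<lambda>u. phi (phi u)) R)"
    by (simp add: ad_t_def tmap2_square_left[OF lp R] tmap2_square_right[OF lp R])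
  also have "\<dots> = ad_t br phi z R"
    by (simp add: ad_t_def tmap2_compose[OF lb lp] tmap2_compose[OF lp lb] br_square)
  finally show ?thesis .
qed

lemma cobound_lin:
  assumes "bilin br"
  shows "lin (cobound br phi r)"
proof -
  have add: "br (x + y) = (\<lambda>u. br x u + br y u)" for x y
    using lin_add[OF bilin_lin_left[OF assms]] by (rule ext)
  have scale: "br (vsc c x) = (\<lambda>u. vsc c (br x u))" for c x
    using lin_vsc[OF bilin_lin_left[OF assms]] by (rule ext)
  show ?thesis
    unfolding lin_def cobound_def ad_t_def
    by (simp add: add scale tmap2_add_left tmap2_add_right tmap2_vsc_left tmap2_vsc_right fun_eq_iff algebra_simps)
qed

lemma cobound_cocycle:
  assumes H: "hom_lie br phi" and W: "weakly_inv br phi"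
    and R: "tmap2 phi id R = tmap2 id phi R"
  shows "cobound br phi R (br x y)
    = ad_t br phi (phi x) (cobound br phi R y) - ad_t br phi (phi y) (cobound br phi R x)"
  using ad_t_bracket[OF H, of x y R] ad_t_tmap2_twist[OF H W R] by (simp add: cobound_def)

lemma hom_lie_conj:
  assumes S: "lin S" and SS: "\<And>x. S (S x) = x" and H: "hom_lie br phi"
  shows "hom_lie (\<lambda>a b. S (br (S a) (S b))) (\<lambda>a. S (phi (S a)))"
  unfolding hom_lie_def bilin_def
proof (intro conjI allI)
  note bl = hom_lie_bilin[OF H]
  show "lin (\<lambda>b. S (br (S u) (S b)))" for u
    by (rule lin_compose[OF S lin_compose[OF bilin_lin_right[OF bl] S]])
  show "lin (\<lambda>a. S (br (S a) (S v)))" for v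
    by (rule lin_compose[OF S lin_compose[OF bilin_lin_left[OF bl] S]])
  show "lin (\<lambda>a. S (phi (S a)))"
    by (rule lin_compose[OF S lin_compose[OF hom_lie_lin[OF H] S]])
  show "S (br (S x) (S y)) = - S (br (S y) (S x))" for x y
    by (subst hom_lie_skew[OF H]) (rule lin_uminus[OF S])
  show "S (phi (S (S (br (S x) (S y))))) = S (br (S (S (phi (S x)))) (S (S (phi (S y)))))" for x y
    by (simp add: SS hom_lie_mult[OF H])
  show "S (br (S (S (phi (S x)))) (S (S (br (S y) (S z))))) + S (br (S (S (phi (S y)))) (S (S (br (S z) (S x)))))
       + S (br (S (S (phi (S z)))) (S (S (br (S x) (S y))))) = 0" for x y z
    using hom_lie_jacobi[OF H, of "S x" "S y" "S z"] by (simp add: SS lin_add[OF S, symmetric] lin_zero[OF S])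
qed

lemma weakly_inv_conj:
  assumes "\<And>x. S (S x) = x" and "weakly_inv br phi"
  shows "weakly_inv (\<lambda>a b. S (br (S a) (S b))) (\<lambda>a. S (phi (S a)))"
  using assms by (simp add: weakly_inv_def)

lemma hom_lie_bialg_cobound_conj:
  assumes H: "hom_lie br phi" and W: "weakly_inv br phi"
    and R: "tmap2 phi id R = tmap2 id phi R"
    and S: "lin S" "\<And>x. S (S x) = x"
    and dual_br_eq: "\<And>a b. dual_br (cobound br phi R) a b = S (br (S a) (S b))"
    and dual_map_eq: "\<And>a. dual_map phi a = S (phi (S a))"
  shows "hom_lie_bialg br phi (cobound br phi R)"
proof -
  have "dual_br (cobound br phi R) = (\<lambda>a b. S (br (S a) (S b)))" "dual_map phi = (\<lambda>a. S (phi (S a)))"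
    using dual_br_eq dual_map_eq by auto
  then show ?thesis
    unfolding hom_lie_bialg_def
    using H W hom_lie_conj[OF S H] weakly_inv_conj[OF S(2) W] cobound_lin[OF hom_lie_bilin[OF H]]
      cobound_cocycle[OF H W R] by simp
qed

subsection \<open>The semidirect product with the dual representation\<close>

lemma mkp_Inl [simp]: "mkp u \<xi> (Inl i) = u i"
  and mkp_Inr [simp]: "mkp u \<xi> (Inr i) = \<xi> i"
  by (simp_all add: mkp_def)

lemma vpart_mkp [simp]: "vpart (mkp u \<xi>) = u"
  and dpart_mkp [simp]: "dpart (mkp u \<xi>) = \<xi>"
  by (simp_all add: vpart_def dpart_def mkp_def)

lemma vpart_simps [simp]:
  "vpart (x + y) = vpart x + vpart y" "vpart (- x) = - vpart x" "vpart (x - y) = vpart x - vpart y"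
  "vpart 0 = 0" "vpart (vsc c x) = vsc c (vpart x)"
  and dpart_simps [simp]:
  "dpart (x + y) = dpart x + dpart y" "dpart (- x) = - dpart x" "dpart (x - y) = dpart x - dpart y"
  "dpart 0 = 0" "dpart (vsc c x) = vsc c (dpart x)"
  by (auto simp: vpart_def dpart_def)

lemma vpart_ev [simp]: "vpart (ev (Inl c)) = ev c" "vpart (ev (Inr c)) = 0"
  and dpart_ev [simp]: "dpart (ev (Inr c)) = ev c" "dpart (ev (Inl c)) = 0"
  by (auto simp: vpart_def dpart_def ev_def)

lemma sd_br_Inl [simp]: "sd_br m psi x y (Inl k) = comm m (vpart x) (vpart y) k"
  and sd_br_Inr [simp]: "sd_br m psi x y (Inr k) = Lcirc m psi (vpart x) (dpart y) k - Lcirc m psi (vpart y) (dpart x) k"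
  and sd_tw_Inl [simp]: "sd_tw psi x (Inl k) = psi (vpart x) k"
  and sd_tw_Inr [simp]: "sd_tw psi x (Inr k) = dual_map psi (dpart x) k"
  by (simp_all add: sd_br_def sd_tw_def)

lemma vpart_sd_br [simp]: "vpart (sd_br m psi x y) = comm m (vpart x) (vpart y)"
  and dpart_sd_br [simp]: "dpart (sd_br m psi x y) = Lcirc m psi (vpart x) (dpart y) - Lcirc m psi (vpart y) (dpart x)"
  and vpart_sd_tw [simp]: "vpart (sd_tw psi x) = psi (vpart x)"
  and dpart_sd_tw [simp]: "dpart (sd_tw psi x) = dual_map psi (dpart x)"
  by (simp_all add: sd_br_def sd_tw_def)

lemma comm_apply: "comm m u v k = m u v k - m v u k"
  by (simp add: comm_def)

lemma Lcirc_apply: "Lcirc m psi u \<xi> j = - dpair \<xi> (m (psi u) (ev j))"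
  by (simp add: Lcirc_def)

locale hom_lsa_sq =
  fixes m :: "('n::finite \<Rightarrow> 'k::field) \<Rightarrow> ('n \<Rightarrow> 'k) \<Rightarrow> ('n \<Rightarrow> 'k)"
    and psi :: "('n \<Rightarrow> 'k) \<Rightarrow> ('n \<Rightarrow> 'k)"
  assumes lsa: "hom_lsa m psi"
    and mult_psi_psi_left: "\<And>u v. m (psi (psi u)) v = m u v"
begin

lemma bilin_m: "bilin m"
  and lin_psi: "lin psi"
  and psi_mult: "psi (m u v) = m (psi u) (psi v)"
  and left_symmetric: "m (m u v) (psi w) - m (psi u) (m v w) = m (m v u) (psi w) - m (psi v) (m u w)"
  using lsa by (simp_all add: hom_lsa_def)

lemma lin_m_left: "lin (\<lambda>u. m u v)"
  and lin_m_right: "lin (m u)"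
  by (simp_all add: bilin_lin_left[OF bilin_m] bilin_lin_right[OF bilin_m])

lemma m_simps [simp]:
  "m 0 v = 0" "m u 0 = 0" "m (- u) v = - m u v" "m u (- v) = - m u v"
  "m (u + u') v = m u v + m u' v" "m u (v + v') = m u v + m u v'"
  "m (u - u') v = m u v - m u' v" "m u (v - v') = m u v - m u v'"
  "m (vsc c u) v = vsc c (m u v)" "m u (vsc c v) = vsc c (m u v)"
  using lin_zero[OF lin_m_left] lin_zero[OF lin_m_right] lin_uminus[OF lin_m_left] lin_uminus[OF lin_m_right]
    lin_add[OF lin_m_left] lin_add[OF lin_m_right] lin_diff[OF lin_m_left] lin_diff[OF lin_m_right]
    lin_vsc[OF lin_m_left] lin_vsc[OF lin_m_right]
  by simp_all

lemma psi_simps [simp]: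
  "psi 0 = 0" "psi (- u) = - psi u" "psi (u + v) = psi u + psi v" "psi (u - v) = psi u - psi v"
  "psi (vsc c u) = vsc c (psi u)"
  by (rule lin_zero lin_uminus lin_add lin_diff lin_vsc, rule lin_psi)+

lemma comm_simps [simp]:
  "comm m 0 v = 0" "comm m u 0 = 0" "comm m (- u) v = - comm m u v" "comm m u (- v) = - comm m u v"
  "comm m (u + u') v = comm m u v + comm m u' v" "comm m u (v + v') = comm m u v + comm m u v'"
  "comm m (vsc c u) v = vsc c (comm m u v)" "comm m u (vsc c v) = vsc c (comm m u v)"
  by (auto simp: comm_def fun_eq_iff algebra_simps)

lemma lin_comm_right: "lin (comm m u)"
  and lin_comm_left: "lin (\<lambda>u. comm m u v)"
  by (simp_all add: lin_def)

lemma Lcirc_simps [simp]: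
  "Lcirc m psi 0 \<xi> = 0" "Lcirc m psi u 0 = 0"
  "Lcirc m psi (- u) \<xi> = - Lcirc m psi u \<xi>" "Lcirc m psi u (- \<xi>) = - Lcirc m psi u \<xi>"
  "Lcirc m psi (u + u') \<xi> = Lcirc m psi u \<xi> + Lcirc m psi u' \<xi>"
  "Lcirc m psi u (\<xi> + \<xi>') = Lcirc m psi u \<xi> + Lcirc m psi u \<xi>'"
  "Lcirc m psi (vsc c u) \<xi> = vsc c (Lcirc m psi u \<xi>)"
  "Lcirc m psi u (vsc c \<xi>) = vsc c (Lcirc m psi u \<xi>)"
  "Lcirc m psi u (\<xi> - \<xi>') = Lcirc m psi u \<xi> - Lcirc m psi u \<xi>'"
  by (auto simp: Lcirc_def fun_eq_iff dpair_add dpair_vsc dpair_diff dpair_commute[of \<xi>] dpair_commute[of \<xi>']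
      dpair_commute[of "vsc c \<xi>"] dpair_commute[of "\<xi> + \<xi>'"] dpair_commute[of "- \<xi>"] dpair_commute[of "\<xi> - \<xi>'"] algebra_simps)

lemma dual_map_simps [simp]:
  "dual_map psi (\<xi> + \<xi>') = dual_map psi \<xi> + dual_map psi \<xi>'"
  "dual_map psi (vsc c \<xi>) = vsc c (dual_map psi \<xi>)"
  "dual_map psi (\<xi> - \<xi>') = dual_map psi \<xi> - dual_map psi \<xi>'"
  by (auto simp: dual_map_def fun_eq_iff dpair_commute[of _ "psi _"] dpair_add dpair_vsc dpair_diff)

lemma dpair_Lcirc: "dpair (Lcirc m psi u \<xi>) y = - dpair \<xi> (m (psi u) y)"
  by (subst dpair_eq_sum[OF lin_m_right]) (simp add: dpair_def Lcirc_def mult.commute sum_negf)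

lemma dual_map_Lcirc: "dual_map psi (Lcirc m psi u \<eta>) = Lcirc m psi (psi u) (dual_map psi \<eta>)"
  by (rule ext) (simp add: dual_map_apply Lcirc_apply dpair_Lcirc dpair_dual_map[OF lin_psi]
      psi_mult mult_psi_psi_left)

lemma Lcirc_comm:
  "Lcirc m psi (comm m u v) (dual_map psi \<xi>)
     = Lcirc m psi (psi u) (Lcirc m psi v \<xi>) - Lcirc m psi (psi v) (Lcirc m psi u \<xi>)"
proof (rule ext)
  fix j
  have "m (comm m u v) (psi (ev j)) = m (psi u) (m v (ev j)) - m (psi v) (m u (ev j))"
    using left_symmetric[of u v "ev j"] by (simp add: comm_def algebra_simps)
  then show "Lcirc m psi (comm m u v) (dual_map psi \<xi>) j
      = (Lcirc m psi (psi u) (Lcirc m psi v \<xi>) - Lcirc m psi (psi v) (Lcirc m psi u \<xi>)) j"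
    by (simp add: Lcirc_apply dpair_dual_map[OF lin_psi] dpair_Lcirc psi_mult mult_psi_psi_left dpair_diff)
qed

lemma comm_jacobi:
  "comm m (psi u) (comm m v w) + comm m (psi v) (comm m w u) + comm m (psi w) (comm m u v) = 0"
proof -
  have ls: "m (m u v) (psi w) - m (psi u) (m v w) - (m (m v u) (psi w) - m (psi v) (m u w)) = 0" for u v w
    by (simp add: left_symmetric)
  have "comm m (psi u) (comm m v w) + comm m (psi v) (comm m w u) + comm m (psi w) (comm m u v)
      = - ((m (m v w) (psi u) - m (psi v) (m w u) - (m (m w v) (psi u) - m (psi w) (m v u)))
        + (m (m w u) (psi v) - m (psi w) (m u v) - (m (m u w) (psi v) - m (psi u) (m w v)))
        + (m (m u v) (psi w) - m (psi u) (m v w) - (m (m v u) (psi w) - m (psi v) (m u w))))"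
    by (simp add: comm_def algebra_simps)
  also have "\<dots> = 0"
    by (simp only: ls) simp
  finally show ?thesis .
qed

lemma sd_hom_lie: "hom_lie (sd_br m psi) (sd_tw psi)"
  unfolding hom_lie_def bilin_def
proof (intro conjI allI)
  show "lin (sd_br m psi u)" "lin (\<lambda>u. sd_br m psi u v)" "lin (sd_tw psi)" for u v
    by (rule linI; case_tac j; simp add: algebra_simps)+
  show "sd_br m psi x y = - sd_br m psi y x" for x y
    by (rule fun_Plus_eqI) (simp_all add: comm_def)
  show "sd_tw psi (sd_br m psi x y) = sd_br m psi (sd_tw psi x) (sd_tw psi y)" for x y
    by (rule fun_Plus_eqI) (simp_all add: comm_def psi_mult dual_map_Lcirc)
  show "sd_br m psi (sd_tw psi x) (sd_br m psi y z) + sd_br m psi (sd_tw psi y) (sd_br m psi z x)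
      + sd_br m psi (sd_tw psi z) (sd_br m psi x y) = 0" for x y z
    using fun_cong[OF comm_jacobi[of "vpart x" "vpart y" "vpart z"]]
    by (intro fun_Plus_eqI) (simp_all add: Lcirc_comm algebra_simps)
qed

lemma sd_weakly_inv:
  assumes "weakly_inv (comm m) psi"
  shows "weakly_inv (sd_br m psi) (sd_tw psi)"
proof -
  have mult_psi_psi_right: "m y (psi (psi x)) = m y x" for x y
    using assms mult_psi_psi_left[of x y] unfolding weakly_inv_def comm_def
    by (metis add_diff_cancel_left' diff_add_cancel minus_diff_eq)
  have "Lcirc m psi (psi (psi u)) \<eta> = Lcirc m psi u \<eta>" for u \<eta>
    by (simp add: Lcirc_def mult_psi_psi_left[of "psi u"])
  moreover have "Lcirc m psi v (dual_map psi (dual_map psi \<xi>)) = Lcirc m psi v \<xi>" for v \<xi>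
    by (rule ext) (simp add: Lcirc_apply dpair_dual_map[OF lin_psi] psi_mult mult_psi_psi_left[of "psi v"]
        mult_psi_psi_right)
  ultimately show ?thesis
    using assms unfolding weakly_inv_def by (intro allI fun_Plus_eqI) simp_all
qed

end

subsection \<open>The canonical 2-tensor and self-duality\<close>

text \<open>The 2-tensor \<Sum>_i v^i \<wedge> f(v_i) in the coordinates of V \<oplus> V*; it does not depend on the
  chosen basis.\<close>

definition canonical_wedge :: "(('n \<Rightarrow> 'k::field) \<Rightarrow> ('n \<Rightarrow> 'k)) \<Rightarrow> ('n + 'n) \<times> ('n + 'n) \<Rightarrow> 'k" where
  "canonical_wedge f = (\<lambda>(x, y). case x of
       Inl a \<Rightarrow> (case y of Inl _ \<Rightarrow> 0 | Inr c \<Rightarrow> - f (ev c) a)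
     | Inr c \<Rightarrow> (case y of Inl a \<Rightarrow> f (ev c) a | Inr _ \<Rightarrow> 0))"

lemma canonical_wedge_simps [simp]:
  "canonical_wedge f (Inl a, Inl a') = 0" "canonical_wedge f (Inl a, Inr c) = - f (ev c) a"
  "canonical_wedge f (Inr c, Inl a) = f (ev c) a" "canonical_wedge f (Inr c, Inr c') = 0"
  by (simp_all add: canonical_wedge_def)

lemma sum_canonical_wedge_id:
  "(\<Sum>s\<in>UNIV. canonical_wedge (\<lambda>x. x) s * (g s :: 'k::field))
     = (\<Sum>c\<in>(UNIV :: 'n::finite set). g (Inr c, Inl c) - g (Inl c, Inr c))"
  by (simp add: sum_UNIV_prod sum_UNIV_Plus ev_apply sum.delta sum_subtractf sum_negf)

lemma canonical_wedge_twist_sym: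
  fixes psi :: "('n::finite \<Rightarrow> 'k::field) \<Rightarrow> ('n \<Rightarrow> 'k)"
  assumes "lin psi"
  shows "tmap2 (sd_tw psi) id (canonical_wedge (\<lambda>x. x)) = tmap2 id (sd_tw psi) (canonical_wedge (\<lambda>x. x))"
proof (rule ext, clarify)
  fix x y :: "'n + 'n"
  show "tmap2 (sd_tw psi) id (canonical_wedge (\<lambda>x. x)) (x, y) = tmap2 id (sd_tw psi) (canonical_wedge (\<lambda>x. x)) (x, y)"
    by (cases x; cases y)
      (simp_all add: tmap2_id_left tmap2_id_right sum_UNIV_Plus ev_apply dual_map_apply sum_negf
        lin_zero[OF assms])
qed

lemma canonical_wedge_psi_psi:
  fixes psi :: "('n::finite \<Rightarrow> 'k::field) \<Rightarrow> ('n \<Rightarrow> 'k)"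
  assumes "lin psi"
  shows "canonical_wedge (\<lambda>x. psi (psi x)) = tmap2 id (\<lambda>u. sd_tw psi (sd_tw psi u)) (canonical_wedge (\<lambda>x. x))"
proof (rule ext, clarify)
  fix x y :: "'n + 'n"
  show "canonical_wedge (\<lambda>x. psi (psi x)) (x, y) = tmap2 id (\<lambda>u. sd_tw psi (sd_tw psi u)) (canonical_wedge (\<lambda>x. x)) (x, y)"
    by (cases x; cases y)
      (simp_all add: tmap2_id_left sum_UNIV_Plus ev_apply dual_map_apply dpair_dual_map[OF assms] sum_negf
        lin_zero[OF assms])
qed

definition swap_parts :: "('n + 'n \<Rightarrow> 'k) \<Rightarrow> ('n + 'n \<Rightarrow> 'k)" where
  "swap_parts x = mkp (dpart x) (vpart x)"

lemma swap_parts_apply [simp]: "swap_parts x (Inl k) = x (Inr k)" "swap_parts x (Inr k) = x (Inl k)"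
  and vpart_swap_parts [simp]: "vpart (swap_parts x) = dpart x"
  and dpart_swap_parts [simp]: "dpart (swap_parts x) = vpart x"
  by (simp_all add: swap_parts_def dpart_def vpart_def)

lemma swap_parts_swap_parts [simp]: "swap_parts (swap_parts x) = x"
  by (rule fun_Plus_eqI) simp_all

lemma lin_swap_parts: "lin (swap_parts :: ('n + 'n \<Rightarrow> 'k::field) \<Rightarrow> _)"
  by (rule linI; case_tac j; simp)

lemma dual_map_sd_tw:
  assumes "lin psi"
  shows "dual_map (sd_tw psi) a = swap_parts (sd_tw psi (swap_parts a))"
proof (rule fun_Plus_eqI)
  show "dual_map (sd_tw psi) a (Inl k) = swap_parts (sd_tw psi (swap_parts a)) (Inl k)" for k
    by (simp add: dual_map_apply dpair_Plus dpair_commute[of "vpart a"])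
  show "dual_map (sd_tw psi) a (Inr k) = swap_parts (sd_tw psi (swap_parts a)) (Inr k)" for k
    by (simp add: dual_map_apply dpair_Plus dpair_dual_map_ev[OF assms] lin_zero[OF assms]
        zero_fun_def[symmetric])
qed

context hom_lsa_sq
begin

lemma dual_br_cobound_canonical_wedge_Inl:
  "dual_br (cobound (sd_br m psi) (sd_tw psi) (canonical_wedge (\<lambda>x. x))) a b (Inl k)
     = swap_parts (sd_br m psi (swap_parts a) (swap_parts b)) (Inl k)"
proof -
  let ?a = "dpart a" and ?b = "dpart b" and ?al = "vpart a" and ?be = "vpart b"
  have "dual_br (cobound (sd_br m psi) (sd_tw psi) (canonical_wedge (\<lambda>x. x))) a b (Inl k)
     = (\<Sum>c\<in>UNIV. dpair ?a (Lcirc m psi (ev k) (ev c)) * dpair ?be (psi (ev c))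
          - dpair ?al (comm m (ev k) (ev c)) * dpair ?b (dual_map psi (ev c))) +
       (\<Sum>c\<in>UNIV. dpair ?a (dual_map psi (ev c)) * dpair ?be (comm m (ev k) (ev c))
          - dpair ?al (psi (ev c)) * dpair ?b (Lcirc m psi (ev k) (ev c)))"
    by (simp add: dual_br_def cobound_def ad_t_def sum.distrib distrib_right tmap2_pairing
        sum_canonical_wedge_id dpair_Plus)
  also have "\<dots> = - (\<Sum>c\<in>UNIV. m (psi (ev k)) ?a c * dpair ?be (psi (ev c)))
       - (\<Sum>c\<in>UNIV. psi ?b c * dpair ?al (comm m (ev k) (ev c)))
       + (\<Sum>c\<in>UNIV. psi ?a c * dpair ?be (comm m (ev k) (ev c)))
       + (\<Sum>c\<in>UNIV. m (psi (ev k)) ?b c * dpair ?al (psi (ev c)))"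
    by (simp add: dpair_dual_map_ev[OF lin_psi] dpair_commute[of _ "Lcirc _ _ _ _"] dpair_Lcirc
        sum_negf sum_subtractf sum.distrib algebra_simps)
  also have "\<dots> = - dpair ?be (psi (m (psi (ev k)) ?a)) - dpair ?al (comm m (ev k) (psi ?b))
       + dpair ?be (comm m (ev k) (psi ?a)) + dpair ?al (psi (m (psi (ev k)) ?b))"
    by (simp only: lin_functional_eq_sum[OF lin_functional_dpair[OF lin_psi], symmetric]
        lin_functional_eq_sum[OF lin_functional_dpair[OF lin_comm_right], symmetric])
  also have "\<dots> = swap_parts (sd_br m psi (swap_parts a) (swap_parts b)) (Inl k)"
    by (simp add: psi_mult mult_psi_psi_left comm_def Lcirc_apply dpair_diff dpair_commute[of _ "m _ _"])
  finally show ?thesis .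
qed

lemma dual_br_cobound_canonical_wedge_Inr:
  "dual_br (cobound (sd_br m psi) (sd_tw psi) (canonical_wedge (\<lambda>x. x))) a b (Inr k)
     = swap_parts (sd_br m psi (swap_parts a) (swap_parts b)) (Inr k)"
proof -
  let ?a = "dpart a" and ?b = "dpart b"
  have "dual_br (cobound (sd_br m psi) (sd_tw psi) (canonical_wedge (\<lambda>x. x))) a b (Inr k)
     = (\<Sum>c\<in>UNIV. dpair ?a (Lcirc m psi (ev c) (ev k)) * dpair ?b (dual_map psi (ev c))) +
       (\<Sum>c\<in>UNIV. - (dpair ?a (dual_map psi (ev c)) * dpair ?b (Lcirc m psi (ev c) (ev k))))"
    by (simp add: dual_br_def cobound_def ad_t_def sum.distrib distrib_right tmap2_pairing
        sum_canonical_wedge_id dpair_Plus)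
  also have "\<dots> = - (\<Sum>c\<in>UNIV. psi ?b c * m (psi (ev c)) ?a k) + (\<Sum>c\<in>UNIV. psi ?a c * m (psi (ev c)) ?b k)"
    by (simp add: dpair_dual_map_ev[OF lin_psi] dpair_commute[of _ "Lcirc _ _ _ _"] dpair_Lcirc
        sum_negf algebra_simps)
  also have "\<dots> = - m (psi (psi ?b)) ?a k + m (psi (psi ?a)) ?b k"
    by (simp only: lin_functional_eq_sum[OF lin_functional_coord[OF lin_compose[OF lin_m_left lin_psi]], symmetric])
  also have "\<dots> = swap_parts (sd_br m psi (swap_parts a) (swap_parts b)) (Inr k)"
    by (simp add: mult_psi_psi_left comm_apply)
  finally show ?thesis .
qed

lemma dual_br_cobound_canonical_wedge:
  "dual_br (cobound (sd_br m psi) (sd_tw psi) (canonical_wedge (\<lambda>x. x))) a b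
     = swap_parts (sd_br m psi (swap_parts a) (swap_parts b))"
  by (rule fun_Plus_eqI) (rule dual_br_cobound_canonical_wedge_Inl dual_br_cobound_canonical_wedge_Inr)+

lemma lin_sd_tw: "lin (sd_tw psi)"
  by (rule hom_lie_lin[OF sd_hom_lie])

lemma canonical_wedge_psi_psi_eq:
  "canonical_wedge (\<lambda>x. psi (psi x)) = tmap2 (sd_tw psi) (sd_tw psi) (canonical_wedge (\<lambda>x. x))"
  using canonical_wedge_psi_psi[OF lin_psi]
    tmap2_square_right[OF lin_sd_tw canonical_wedge_twist_sym[OF lin_psi]] by simp

lemma canonical_wedge_psi_psi_twist_sym:
  "tmap2 (sd_tw psi) id (canonical_wedge (\<lambda>x. psi (psi x))) = tmap2 id (sd_tw psi) (canonical_wedge (\<lambda>x. psi (psi x)))"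
  unfolding canonical_wedge_psi_psi_eq
  by (rule tmap2_twist_sym_tmap2[OF lin_sd_tw canonical_wedge_twist_sym[OF lin_psi]])

context
  assumes weakly_inv_comm: "weakly_inv (comm m) psi"
begin

lemma hom_lie_bialg_cobound_canonical_wedge:
  "hom_lie_bialg (sd_br m psi) (sd_tw psi) (cobound (sd_br m psi) (sd_tw psi) (canonical_wedge (\<lambda>x. x)))"
  by (rule hom_lie_bialg_cobound_conj[OF sd_hom_lie sd_weakly_inv[OF weakly_inv_comm]
        canonical_wedge_twist_sym[OF lin_psi] lin_swap_parts swap_parts_swap_parts
        dual_br_cobound_canonical_wedge dual_map_sd_tw[OF lin_psi]])

lemma cobound_canonical_wedge_psi_psi:
  "cobound (sd_br m psi) (sd_tw psi) (canonical_wedge (\<lambda>x. psi (psi x)))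
     = cobound (sd_br m psi) (sd_tw psi) (canonical_wedge (\<lambda>x. x))"
  unfolding canonical_wedge_psi_psi_eq cobound_def
  by (simp add: ad_t_tmap2_twist[OF sd_hom_lie sd_weakly_inv[OF weakly_inv_comm]
        canonical_wedge_twist_sym[OF lin_psi]])

end

end

locale dual_bases =
  fixes b bd :: "'n::finite \<Rightarrow> 'n \<Rightarrow> 'k::field"
  assumes basis: "is_basis b"
    and dual: "\<And>i j. dpair (bd i) (b j) = (if i = j then 1 else 0)"
begin

lemma dual_basis_expansion: "w = (\<Sum>i\<in>UNIV. vsc (dpair (bd i) w) (b i))"
proof -
  obtain c where c: "w = (\<Sum>i\<in>UNIV. vsc (c i) (b i))"
    using basis unfolding is_basis_def by blast
  have "dpair (bd j) w = c j" for j
  proof -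
    have "lin_functional (dpair (bd j))"
      by (simp add: lin_functional_def dpair_add dpair_vsc)
    then have "dpair (bd j) w = (\<Sum>i\<in>UNIV. dpair (bd j) (vsc (c i) (b i)))"
      by (subst c) (rule lin_functional_sum)
    also have "\<dots> = c j"
      by (simp add: dpair_vsc dual)
    finally show ?thesis .
  qed
  with c show ?thesis
    by simp
qed

lemma sum_dual_basis:
  assumes "lin_functional h"
  shows "(\<Sum>i\<in>UNIV. dpair (bd i) w * h (b i)) = h w"
proof -
  have "h w = h (\<Sum>i\<in>UNIV. vsc (dpair (bd i) w) (b i))"
    by (subst dual_basis_expansion) (rule refl)
  also have "\<dots> = (\<Sum>i\<in>UNIV. dpair (bd i) w * h (b i))"
    using assms by (simp add: lin_functional_sum lin_functional_def)
  finally show ?thesis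
    by simp
qed

lemma sum_dual_basis_compose:
  assumes H: "lin_functional H" and K: "lin K"
  shows "(\<Sum>a\<in>UNIV. \<Sum>a'\<in>UNIV. H (b a) * dpair (bd a') w * dpair (bd a) (K (b a'))) = H (K w)"
proof -
  have "(\<Sum>a'\<in>UNIV. H (b a) * dpair (bd a') w * dpair (bd a) (K (b a'))) = dpair (bd a) (K w) * H (b a)" for a
    using sum_dual_basis[OF lin_functional_scale[where c = "H (b a)", OF lin_functional_dpair[OF K]], of w]
    by (simp add: algebra_simps)
  then show ?thesis
    by (simp add: sum_dual_basis[OF H])
qed

lemma sum_dual_basis_compose':
  assumes "lin_functional H" and "lin K"
  shows "(\<Sum>a\<in>UNIV. \<Sum>a'\<in>UNIV. H (b a') * dpair (bd a) w * dpair (bd a') (K (b a))) = H (K w)"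
  by (subst sum.swap) (rule sum_dual_basis_compose[OF assms])

lemma sum_dual_basis_bilinear:
  assumes G1: "\<And>u. lin_functional (G u)" and G2: "\<And>v. lin_functional (\<lambda>u. G u v)"
  shows "(\<Sum>a\<in>UNIV. \<Sum>a'\<in>UNIV. G (b a) (b a') * dpair (bd a) w1 * dpair (bd a') w2) = G w1 w2"
proof -
  have "(\<Sum>a'\<in>UNIV. G (b a) (b a') * dpair (bd a) w1 * dpair (bd a') w2) = dpair (bd a) w1 * G (b a) w2" for a
    using sum_dual_basis[OF lin_functional_scale[where c = "dpair (bd a) w1", OF G1[of "b a"]], of w2]
    by (simp add: algebra_simps)
  then show ?thesis
    by (simp add: sum_dual_basis[OF G2])
qed

abbreviation dual_wedge_x :: "(('n \<Rightarrow> 'k) \<Rightarrow> ('n \<Rightarrow> 'k)) \<Rightarrow> 'n \<times> bool \<Rightarrow> 'n + 'n \<Rightarrow> 'k" where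
  "dual_wedge_x f \<equiv> wedge_x (\<lambda>i. mkp 0 (bd i)) (\<lambda>i. mkp (f (b i)) 0)"

abbreviation dual_wedge_y :: "(('n \<Rightarrow> 'k) \<Rightarrow> ('n \<Rightarrow> 'k)) \<Rightarrow> 'n \<times> bool \<Rightarrow> 'n + 'n \<Rightarrow> 'k" where
  "dual_wedge_y f \<equiv> wedge_y (\<lambda>i. mkp 0 (bd i)) (\<lambda>i. mkp (f (b i)) 0)"

lemma tensor_of_dual_wedge:
  assumes "lin f"
  shows "tensor_of UNIV (dual_wedge_x f) (dual_wedge_y f) = canonical_wedge f"
proof (rule ext, clarify)
  fix x y :: "'n + 'n"
  have "(\<Sum>i\<in>UNIV. bd i c * f (b i) a) = f (ev c) a" for c a
    using sum_dual_basis[OF lin_functional_coord[OF assms], of "ev c"] by simp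
  then show "tensor_of UNIV (dual_wedge_x f) (dual_wedge_y f) (x, y) = canonical_wedge f (x, y)"
    by (cases x; cases y) (simp_all add: tensor_of_def sum_apply tensor2_def sum_UNIV_prod_bool
        wedge_x_def wedge_y_def sum_negf mult.commute[of "f _ _"])
qed

end

subsection \<open>The classical Hom-Yang-Baxter equation\<close>

locale hom_lsa_sq_dual_bases = hom_lsa_sq m psi + dual_bases b bd
  for m :: "('n::finite \<Rightarrow> 'k::field) \<Rightarrow> ('n \<Rightarrow> 'k) \<Rightarrow> ('n \<Rightarrow> 'k)"
    and psi and b bd :: "'n \<Rightarrow> 'n \<Rightarrow> 'k"
begin

context
  fixes f :: "('n \<Rightarrow> 'k) \<Rightarrow> ('n \<Rightarrow> 'k)"
  assumes lin_f: "lin f"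
    and f_psi: "\<And>u. f (psi u) = psi (f u)"
    and f_mult: "\<And>u v. f (m u v) = m (f u) (f v)"
    and mult_psi_f_psi: "\<And>u v. m (psi (f (psi u))) v = m u v"
begin

lemma lin_functional_psi_f: "lin_functional (\<lambda>v. - psi (f v) k)"
  by (rule lin_functional_uminus[OF lin_functional_coord[OF lin_compose[OF lin_psi lin_f]]])

lemma lin_m_psi_f: "lin (\<lambda>v. m (psi (f v)) e)"
  by (rule lin_compose[OF lin_m_left lin_compose[OF lin_psi lin_f]])

lemma lin_functional_comm_f_right: "lin_functional (\<lambda>v. comm m (f u) (f v) k)"
  and lin_functional_comm_f_left: "lin_functional (\<lambda>u. comm m (f u) (f v) k)"
  by (rule lin_functional_coord[OF lin_compose[OF lin_comm_right lin_f]]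
      lin_functional_coord[OF lin_compose[OF lin_comm_left lin_f]])+

lemmas dual_basis_sums = sum_dual_basis_compose[OF lin_functional_psi_f lin_m_psi_f]
  sum_dual_basis_compose'[OF lin_functional_psi_f lin_m_psi_f]
  sum_dual_basis_bilinear[OF lin_functional_comm_f_right lin_functional_comm_f_left]

lemma comm_f_psi: "comm m (f (psi u)) (f (psi v)) k = psi (f (m u v)) k - psi (f (m v u)) k"
  by (simp add: comm_def f_psi[symmetric] f_mult[symmetric] psi_mult)

lemmas cyb_defs = CYB_def sum_apply tensor3_def sum_UNIV_prod_bool wedge_x_def wedge_y_def

lemma cyb_dual_wedge_Inl_Inr_Inr:
  "CYB (sd_br m psi) (sd_tw psi) UNIV (dual_wedge_x f) (dual_wedge_y f) (Inl k, Inr s, Inr t) = 0"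
proof -
  have "CYB (sd_br m psi) (sd_tw psi) UNIV (dual_wedge_x f) (dual_wedge_y f) (Inl k, Inr s, Inr t)
     = (\<Sum>a\<in>UNIV. \<Sum>a'\<in>UNIV.
         (- psi (f (b a)) k) * dpair (bd a') (psi (ev s)) * dpair (bd a) (m (psi (f (b a'))) (ev t))
       + (comm m (f (b a)) (f (b a')) k * dpair (bd a) (psi (ev s)) * dpair (bd a') (psi (ev t))
       - (- psi (f (b a)) k) * dpair (bd a') (psi (ev t)) * dpair (bd a) (m (psi (f (b a'))) (ev s))))"
    by (simp add: cyb_defs Lcirc_apply dual_map_apply algebra_simps)
  also have "\<dots> = (\<Sum>a\<in>UNIV. \<Sum>a'\<in>UNIV. (- psi (f (b a)) k) * dpair (bd a') (psi (ev s)) * dpair (bd a) (m (psi (f (b a'))) (ev t)))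
     + ((\<Sum>a\<in>UNIV. \<Sum>a'\<in>UNIV. comm m (f (b a)) (f (b a')) k * dpair (bd a) (psi (ev s)) * dpair (bd a') (psi (ev t)))
     - (\<Sum>a\<in>UNIV. \<Sum>a'\<in>UNIV. (- psi (f (b a)) k) * dpair (bd a') (psi (ev t)) * dpair (bd a) (m (psi (f (b a'))) (ev s))))"
    by (simp only: sum.distrib sum_subtractf)
  also have "\<dots> = - psi (f (m (psi (f (psi (ev s)))) (ev t))) k
      + (comm m (f (psi (ev s))) (f (psi (ev t))) k - - psi (f (m (psi (f (psi (ev t)))) (ev s))) k)"
    by (simp only: dual_basis_sums)
  also have "\<dots> = 0"
    by (simp add: mult_psi_f_psi comm_f_psi)
  finally show ?thesis .
qed

lemma cyb_dual_wedge_Inr_Inl_Inr: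
  "CYB (sd_br m psi) (sd_tw psi) UNIV (dual_wedge_x f) (dual_wedge_y f) (Inr k, Inl s, Inr t) = 0"
proof -
  have "CYB (sd_br m psi) (sd_tw psi) UNIV (dual_wedge_x f) (dual_wedge_y f) (Inr k, Inl s, Inr t)
     = (\<Sum>a\<in>UNIV. \<Sum>a'\<in>UNIV.
         (- psi (f (b a)) s) * dpair (bd a') (psi (ev t)) * dpair (bd a) (m (psi (f (b a'))) (ev k))
       - comm m (f (b a)) (f (b a')) s * dpair (bd a) (psi (ev k)) * dpair (bd a') (psi (ev t))
       - (- psi (f (b a')) s) * dpair (bd a) (psi (ev k)) * dpair (bd a') (m (psi (f (b a))) (ev t)))"
    by (simp add: cyb_defs Lcirc_apply dual_map_apply algebra_simps)
  also have "\<dots> = (\<Sum>a\<in>UNIV. \<Sum>a'\<in>UNIV. (- psi (f (b a)) s) * dpair (bd a') (psi (ev t)) * dpair (bd a) (m (psi (f (b a'))) (ev k)))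
     - (\<Sum>a\<in>UNIV. \<Sum>a'\<in>UNIV. comm m (f (b a)) (f (b a')) s * dpair (bd a) (psi (ev k)) * dpair (bd a') (psi (ev t)))
     - (\<Sum>a\<in>UNIV. \<Sum>a'\<in>UNIV. (- psi (f (b a')) s) * dpair (bd a) (psi (ev k)) * dpair (bd a') (m (psi (f (b a))) (ev t)))"
    by (simp only: sum.distrib sum_subtractf)
  also have "\<dots> = - psi (f (m (psi (f (psi (ev t)))) (ev k))) s
      - comm m (f (psi (ev k))) (f (psi (ev t))) s - - psi (f (m (psi (f (psi (ev k)))) (ev t))) s"
    by (simp only: dual_basis_sums)
  also have "\<dots> = 0"
    by (simp add: mult_psi_f_psi comm_f_psi)
  finally show ?thesis .
qed

lemma cyb_dual_wedge_Inr_Inr_Inl: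
  "CYB (sd_br m psi) (sd_tw psi) UNIV (dual_wedge_x f) (dual_wedge_y f) (Inr k, Inr s, Inl t) = 0"
proof -
  have "CYB (sd_br m psi) (sd_tw psi) UNIV (dual_wedge_x f) (dual_wedge_y f) (Inr k, Inr s, Inl t)
     = (\<Sum>a\<in>UNIV. \<Sum>a'\<in>UNIV.
         (- psi (f (b a')) t) * dpair (bd a) (psi (ev k)) * dpair (bd a') (m (psi (f (b a))) (ev s))
       + comm m (f (b a)) (f (b a')) t * dpair (bd a) (psi (ev k)) * dpair (bd a') (psi (ev s))
       - (- psi (f (b a')) t) * dpair (bd a) (psi (ev s)) * dpair (bd a') (m (psi (f (b a))) (ev k)))"
    by (simp add: cyb_defs Lcirc_apply dual_map_apply algebra_simps sum.distrib sum_subtractf sum_negf)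
  also have "\<dots> = (\<Sum>a\<in>UNIV. \<Sum>a'\<in>UNIV. (- psi (f (b a')) t) * dpair (bd a) (psi (ev k)) * dpair (bd a') (m (psi (f (b a))) (ev s)))
     + (\<Sum>a\<in>UNIV. \<Sum>a'\<in>UNIV. comm m (f (b a)) (f (b a')) t * dpair (bd a) (psi (ev k)) * dpair (bd a') (psi (ev s)))
     - (\<Sum>a\<in>UNIV. \<Sum>a'\<in>UNIV. (- psi (f (b a')) t) * dpair (bd a) (psi (ev s)) * dpair (bd a') (m (psi (f (b a))) (ev k)))"
    by (simp only: sum.distrib sum_subtractf)
  also have "\<dots> = - psi (f (m (psi (f (psi (ev k)))) (ev s))) t
      + comm m (f (psi (ev k))) (f (psi (ev s))) t - - psi (f (m (psi (f (psi (ev s)))) (ev k))) t"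
    by (simp only: dual_basis_sums)
  also have "\<dots> = 0"
    by (simp add: mult_psi_f_psi comm_f_psi)
  finally show ?thesis .
qed

lemma cyb_dual_wedge: "CYB (sd_br m psi) (sd_tw psi) UNIV (dual_wedge_x f) (dual_wedge_y f) = 0"
proof (rule ext, clarify)
  fix x y z :: "'n + 'n"
  show "CYB (sd_br m psi) (sd_tw psi) UNIV (dual_wedge_x f) (dual_wedge_y f) (x, y, z) = 0 (x, y, z)"
    by (cases x; cases y; cases z)
      (simp_all add: cyb_dual_wedge_Inl_Inr_Inr cyb_dual_wedge_Inr_Inl_Inr cyb_dual_wedge_Inr_Inr_Inl,
        simp_all add: cyb_defs)
qed

end

lemma cyb_dual_wedge_id: "CYB (sd_br m psi) (sd_tw psi) UNIV (dual_wedge_x (\<lambda>x. x)) (dual_wedge_y (\<lambda>x. x)) = 0"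
  by (rule cyb_dual_wedge) (simp_all add: mult_psi_psi_left)

lemma cyb_dual_wedge_psi_psi:
  "CYB (sd_br m psi) (sd_tw psi) UNIV (dual_wedge_x (\<lambda>x. psi (psi x))) (dual_wedge_y (\<lambda>x. psi (psi x))) = 0"
  by (rule cyb_dual_wedge) (simp_all add: lin_compose lin_psi psi_mult mult_psi_psi_left)

end

theorem corollary5p11:
  fixes m :: "('n::finite \<Rightarrow> 'k::field) \<Rightarrow> ('n \<Rightarrow> 'k) \<Rightarrow> ('n \<Rightarrow> 'k)"
    and psi :: "('n \<Rightarrow> 'k) \<Rightarrow> ('n \<Rightarrow> 'k)"
    and b bd :: "'n \<Rightarrow> 'n \<Rightarrow> 'k"
  assumes lsa: "hom_lsa m psi"
    and sq: "\<forall>u v. m u v = m (psi (psi u)) v"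
    and basis: "is_basis b"
    and dual: "\<forall>i j. dpair (bd i) (b j) = (if i = j then 1 else 0)"
  shows "CYB (sd_br m psi) (sd_tw psi) UNIV
            (wedge_x (\<lambda>i. mkp 0 (bd i)) (\<lambda>i. mkp (b i) 0))
            (wedge_y (\<lambda>i. mkp 0 (bd i)) (\<lambda>i. mkp (b i) 0)) = 0
       \<and> CYB (sd_br m psi) (sd_tw psi) UNIV
            (wedge_x (\<lambda>i. mkp 0 (bd i)) (\<lambda>i. mkp (psi (psi (b i))) 0))
            (wedge_y (\<lambda>i. mkp 0 (bd i)) (\<lambda>i. mkp (psi (psi (b i))) 0)) = 0
       \<and> (weakly_inv (comm m) psi \<longrightarrow>
           (let r1 = tensor_of UNIV
                       (wedge_x (\<lambda>i. mkp 0 (bd i)) (\<lambda>i. mkp (b i) 0))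
                       (wedge_y (\<lambda>i. mkp 0 (bd i)) (\<lambda>i. mkp (b i) 0));
                r2 = tensor_of UNIV
                       (wedge_x (\<lambda>i. mkp 0 (bd i)) (\<lambda>i. mkp (psi (psi (b i))) 0))
                       (wedge_y (\<lambda>i. mkp 0 (bd i)) (\<lambda>i. mkp (psi (psi (b i))) 0))
            in tmap2 (sd_tw psi) id r1 = tmap2 id (sd_tw psi) r1
             \<and> tmap2 (sd_tw psi) id r2 = tmap2 id (sd_tw psi) r2
             \<and> hom_lie_bialg (sd_br m psi) (sd_tw psi) (cobound (sd_br m psi) (sd_tw psi) r1)
             \<and> hom_lie_bialg (sd_br m psi) (sd_tw psi) (cobound (sd_br m psi) (sd_tw psi) r2)
             \<and> cobound (sd_br m psi) (sd_tw psi) r1 = cobound (sd_br m psi) (sd_tw psi) r2))"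
proof -
  interpret hom_lsa_sq_dual_bases m psi b bd
    by unfold_locales (use lsa sq basis dual in auto)
  have r1: "tensor_of UNIV (dual_wedge_x (\<lambda>x. x)) (dual_wedge_y (\<lambda>x. x)) = canonical_wedge (\<lambda>x. x)"
    by (rule tensor_of_dual_wedge[OF lin_ident])
  have r2: "tensor_of UNIV (dual_wedge_x (\<lambda>x. psi (psi x))) (dual_wedge_y (\<lambda>x. psi (psi x)))
      = canonical_wedge (\<lambda>x. psi (psi x))"
    by (rule tensor_of_dual_wedge[OF lin_compose[OF lin_psi lin_psi]])
  show ?thesis
    unfolding Let_def r1[simplified] r2
    using cyb_dual_wedge_id cyb_dual_wedge_psi_psi canonical_wedge_twist_sym[OF lin_psi]
      canonical_wedge_psi_psi_twist_sym hom_lie_bialg_cobound_canonical_wedge cobound_canonical_wedge_psi_psi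
    by simp
qed

end
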